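(* For every $n\ge 1$, the upper-diagonal CNMs of size $n$ are in bijection with the permutations in $S_{n-1}$; in particular there are exactly $(n-1)!$ upper-diagonal CNMs of size $n$.
   Context: A complete non-ambiguous matrix (CNM) of size $n$ is an $n\times n$ matrix $M=(m_{i,j})$ with entries in $\{0,1\}$ whose support $T=\{(i,j): m_{i,j}=1\}$ (whose elements are called vertices) satisfies: (1) $(1,1)\in T$; (2) for every $p=(i,j)\in T$ with $p\neq(1,1)$, exactly one of the following holds: there is $(i',j)\in T$ with $i'<i$, or there is $(i,j')\in T$ with $j'<j$; (3) every row and every column of $M$ contains at least one vertex; (4) define the parent of $p=(i,j)\neq(1,1)$ to be $(i',j)$ with $i'<i$ maximal if such a vertex exists, and otherwise $(i,j')$ with $j'<j$ maximal; then every vertex is the parent of either zero or exactly two vertices. A vertex with no children is a leaf. A CNM of size $n$ is upper-diagonal if its leaves are exactly the positions $(i,n+1-i)$, $1\le i\le n$ (i.e. its leaf matrix is the anti-diagonal permutation matrix). *)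

theory Defs
  imports Main "HOL-Combinatorics.Permutations"
begin

text \<open>A 0/1 matrix of size n is represented by its support
  T \<subseteq> {1..n} \<times> {1..n} (1-based row/column indices); the elements of T are the vertices.\<close>

definition cnm_parent :: "(nat \<times> nat) set \<Rightarrow> nat \<times> nat \<Rightarrow> nat \<times> nat" where
  "cnm_parent T p =
     (let i = fst p; j = snd p in
      if \<exists>i'<i. (i', j) \<in> T then (Max {i'. i' < i \<and> (i', j) \<in> T}, j)
      else (i, Max {j'. j' < j \<and> (i, j') \<in> T}))"

definition cnm_children :: "(nat \<times> nat) set \<Rightarrow> nat \<times> nat \<Rightarrow> (nat \<times> nat) set" where
  "cnm_children T p = {q \<in> T. q \<noteq> (1, 1) \<and> cnm_parent T q = p}"

definition is_cnm :: "nat \<Rightarrow> (nat \<times> nat) set \<Rightarrow> bool" where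
  "is_cnm n T \<longleftrightarrow>
     T \<subseteq> {1..n} \<times> {1..n} \<and>
     (1, 1) \<in> T \<and>
     (\<forall>(i, j) \<in> T. (i, j) \<noteq> (1, 1) \<longrightarrow>
        ((\<exists>i'<i. (i', j) \<in> T) \<noteq> (\<exists>j'<j. (i, j') \<in> T))) \<and>
     (\<forall>i \<in> {1..n}. \<exists>j. (i, j) \<in> T) \<and>
     (\<forall>j \<in> {1..n}. \<exists>i. (i, j) \<in> T) \<and>
     (\<forall>p \<in> T. card (cnm_children T p) = 0 \<or> card (cnm_children T p) = 2)"

definition cnm_leaves :: "(nat \<times> nat) set \<Rightarrow> (nat \<times> nat) set" where
  "cnm_leaves T = {p \<in> T. cnm_children T p = {}}"

definition is_upper_diagonal_cnm :: "nat \<Rightarrow> (nat \<times> nat) set \<Rightarrow> bool" where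
  "is_upper_diagonal_cnm n T \<longleftrightarrow>
     is_cnm n T \<and> cnm_leaves T = {(i, n + 1 - i) | i. i \<in> {1..n}}"

end

theory Submission
  imports Defs
begin

text \<open>An upper-diagonal CNM of size \<open>n\<close> lies in the staircase \<open>i + j \<le> n + 1\<close> and
  contains its anti-diagonal. Conversely, a subset of the staircase containing the
  anti-diagonal in which every vertex other than \<open>(1, 1)\<close> has a vertex either above
  it or to its left, but not both, is an upper-diagonal CNM: the children of a vertex
  off the anti-diagonal are its nearest neighbours to the right and below, which exist
  because its row and its column reach the anti-diagonal.

  These sets are counted row by row. After removing the top rows, let \<open>V\<close> be the set
  of columns already occupied. The next row must start in a column of \<open>V\<close>, end on the
  anti-diagonal and avoid \<open>V\<close> otherwise; summing over all such rows shows that the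
  number of completions of a staircase of size \<open>m\<close> is \<open>\<Prod>j\<in>{2..m}-V. j - 1\<close>, which
  for \<open>V = {1}\<close> is \<open>(n - 1)!\<close>. The bijection with the permutations of \<open>n - 1\<close> letters
  then follows from equality of the cardinalities.\<close>

lemma sum_prod_split_telescope:
  assumes "1 \<in> V" "1 \<le> t"
  shows "(\<Sum>a\<in>{a\<in>V. 1\<le>a \<and> a\<le>t}. (\<Prod>j\<in>{2..a}-V. j-1) * (\<Prod>j\<in>{Suc a..t}-V. j))
         = t * (\<Prod>j\<in>{2..t}-V. j-(1::nat))"
  using assms(2)
proof (induction t rule: dec_induct)
  case base
  have "{a\<in>V. 1\<le>a \<and> a\<le>1} = {1}" using assms(1) by auto
  then show ?case by simp
next
  case (step t)
  show ?case
  proof (cases "Suc t \<in> V")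
    case True
    have e1: "{a\<in>V. 1\<le>a \<and> a\<le>Suc t} = insert (Suc t) {a\<in>V. 1\<le>a \<and> a\<le>t}"
      using True by auto
    have e2: "\<And>a. a \<le> t \<Longrightarrow> {Suc a..Suc t}-V = {Suc a..t}-V"
      using True by (auto simp: le_Suc_eq)
    have e3: "{2..Suc t}-V = {2..t}-V" using True by (auto simp: le_Suc_eq)
    have "(\<Sum>a\<in>{a\<in>V. 1\<le>a \<and> a\<le>Suc t}. (\<Prod>j\<in>{2..a}-V. j-1) * (\<Prod>j\<in>{Suc a..Suc t}-V. j))
       = (\<Prod>j\<in>{2..Suc t}-V. j-1)
         + (\<Sum>a\<in>{a\<in>V. 1\<le>a \<and> a\<le>t}. (\<Prod>j\<in>{2..a}-V. j-1) * (\<Prod>j\<in>{Suc a..Suc t}-V. j))"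
      unfolding e1 by (subst sum.insert) auto
    also have "(\<Sum>a\<in>{a\<in>V. 1\<le>a \<and> a\<le>t}. (\<Prod>j\<in>{2..a}-V. j-1) * (\<Prod>j\<in>{Suc a..Suc t}-V. j))
       = (\<Sum>a\<in>{a\<in>V. 1\<le>a \<and> a\<le>t}. (\<Prod>j\<in>{2..a}-V. j-1) * (\<Prod>j\<in>{Suc a..t}-V. j))"
      by (rule sum.cong) (auto simp: e2)
    finally show ?thesis using step.IH e3 by simp
  next
    case False
    have e1: "{a\<in>V. 1\<le>a \<and> a\<le>Suc t} = {a\<in>V. 1\<le>a \<and> a\<le>t}"
      using False by (auto simp: le_Suc_eq)
    have e2: "\<And>a. a \<le> t \<Longrightarrow> {Suc a..Suc t}-V = insert (Suc t) ({Suc a..t}-V)"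
      using False by (auto simp: le_Suc_eq)
    have e3: "{2..Suc t}-V = insert (Suc t) ({2..t}-V)"
      using False step.hyps by (auto simp: le_Suc_eq)
    have "(\<Sum>a\<in>{a\<in>V. 1\<le>a \<and> a\<le>Suc t}. (\<Prod>j\<in>{2..a}-V. j-1) * (\<Prod>j\<in>{Suc a..Suc t}-V. j))
       = (\<Sum>a\<in>{a\<in>V. 1\<le>a \<and> a\<le>t}. Suc t * ((\<Prod>j\<in>{2..a}-V. j-1) * (\<Prod>j\<in>{Suc a..t}-V. j)))"
      unfolding e1 by (rule sum.cong) (auto simp: e2 algebra_simps)
    also have "\<dots> = Suc t * (t * (\<Prod>j\<in>{2..t}-V. j-(1::nat)))"
      unfolding sum_distrib_left[symmetric] step.IH ..
    finally show ?thesis using e3 by simp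
  qed
qed

lemma prod_atLeastAtMost_pred_eq_fact: "(\<Prod>j\<in>{2..Suc m}. j - 1) = fact m"
proof (induction m)
  case (Suc m)
  have "{2..Suc (Suc m)} = insert (Suc (Suc m)) {2..Suc m}" by auto
  then show ?case using Suc by simp
qed simp

section \<open>Admissible rows\<close>

text \<open>Candidate first rows of a staircase of size \<open>m\<close> whose columns in \<open>V\<close> are already
  occupied from above.\<close>

definition admissible_row :: "nat \<Rightarrow> nat set \<Rightarrow> nat set \<Rightarrow> bool" where
  "admissible_row m V R \<longleftrightarrow>
     R \<subseteq> {1..m} \<and> m \<in> R \<and> (\<forall>j\<in>R. (j \<in> V) \<noteq> (\<exists>j'\<in>R. j' < j))"

lemma finite_admissible_rows: "finite {R. admissible_row m V R}"
  by (rule finite_subset[of _ "Pow {1..m}"]) (auto simp: admissible_row_def)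

lemma admissible_rows_last_in:
  assumes "Suc k \<in> V"
  shows "{R. admissible_row (Suc k) V R} = {{Suc k}}"
proof -
  have "R = {Suc k}" if "admissible_row (Suc k) V R" for R
  proof -
    from that have R: "R \<subseteq> {1..Suc k}" "Suc k \<in> R" "\<forall>j\<in>R. (j \<in> V) \<noteq> (\<exists>j'\<in>R. j' < j)"
      by (auto simp: admissible_row_def)
    have "\<not> (\<exists>j'\<in>R. j' < Suc k)" using R(2,3) assms by blast
    then show ?thesis using R(1,2) by force
  qed
  moreover have "admissible_row (Suc k) V {Suc k}" using assms by (auto simp: admissible_row_def)
  ultimately show ?thesis by blast
qed

lemma admissible_rows_last_notin:
  assumes "Suc k \<notin> V" "1 \<in> V"
  shows "{R. admissible_row (Suc k) V R} =
    (\<lambda>(a,S). insert a (insert (Suc k) S)) ` (SIGMA a:{a\<in>V. 1\<le>a \<and> a\<le>k}. Pow ({Suc a..k} - V))"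
proof (rule set_eqI, rule iffI)
  fix R assume "R \<in> {R. admissible_row (Suc k) V R}"
  then have R: "R \<subseteq> {1..Suc k}" "Suc k \<in> R" "\<forall>j\<in>R. (j \<in> V) \<noteq> (\<exists>j'\<in>R. j' < j)"
    by (auto simp: admissible_row_def)
  define a where "a = Min R"
  have fin: "finite R" using R(1) finite_subset by blast
  have aR: "a \<in> R" using R(2) fin unfolding a_def by (intro Min_in) auto
  have amin: "\<forall>j\<in>R. a \<le> j" using fin a_def by simp
  then have aV: "a \<in> V" using R(3) aR by (meson not_less)
  have ak: "a \<le> k" using aV assms(1) aR R(1) by (metis atLeastAtMost_iff le_Suc_eq subsetD)
  have a1: "1 \<le> a" using aR R(1) by auto
  define S where "S = R - {a, Suc k}"
  have "S \<subseteq> {Suc a..k} - V"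
  proof
    fix j assume "j \<in> S"
    then have j: "j \<in> R" "j \<noteq> a" "j \<noteq> Suc k" by (auto simp: S_def)
    have "a < j" using amin j by (simp add: order_le_neq_trans)
    then have "j \<notin> V" using R(3) j aR by blast
    then show "j \<in> {Suc a..k} - V" using j R(1) \<open>a < j\<close> by auto
  qed
  moreover have "R = insert a (insert (Suc k) S)" using aR R(2) by (auto simp: S_def)
  ultimately show "R \<in> (\<lambda>(a,S). insert a (insert (Suc k) S)) `
      (SIGMA a:{a\<in>V. 1\<le>a \<and> a\<le>k}. Pow ({Suc a..k} - V))"
    using aV ak a1 by (intro image_eqI[of _ _ "(a,S)"]) auto
next
  fix R assume "R \<in> (\<lambda>(a,S). insert a (insert (Suc k) S)) `
      (SIGMA a:{a\<in>V. 1\<le>a \<and> a\<le>k}. Pow ({Suc a..k} - V))"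
  then obtain a S where aS: "a \<in> V" "1 \<le> a" "a \<le> k" "S \<subseteq> {Suc a..k} - V"
    and R: "R = insert a (insert (Suc k) S)" by auto
  have "(j \<in> V) \<noteq> (\<exists>j'\<in>R. j' < j)" if j: "j \<in> R" for j
  proof (cases "j = a")
    case True
    have "\<not> (\<exists>j'\<in>R. j' < a)" using R aS by auto
    then show ?thesis using True aS by simp
  next
    case False
    then have "j \<notin> V" "a < j" using j R aS assms(1) by auto
    then show ?thesis using R by auto
  qed
  then show "R \<in> {R. admissible_row (Suc k) V R}" using R aS by (auto simp: admissible_row_def)
qed

lemma inj_on_admissible_row_param:
  assumes "Suc k \<notin> V"
  shows "inj_on (\<lambda>(a,S). insert a (insert (Suc k) S))
           (SIGMA a:{a\<in>V. 1\<le>a \<and> a\<le>k}. Pow ({Suc a..k} - V))"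
proof (rule inj_onI, clarify)
  fix a S b T
  assume H: "a \<in> V" "1 \<le> a" "a \<le> k" "S \<subseteq> {Suc a..k} - V"
            "b \<in> V" "1 \<le> b" "b \<le> k" "T \<subseteq> {Suc b..k} - V"
    and eq: "insert a (insert (Suc k) S) = insert b (insert (Suc k) T)"
  have "finite S" "finite T" using H(4,8) by (auto intro: finite_subset)
  have "a = Min (insert a (insert (Suc k) S))"
    using H(3,4) \<open>finite S\<close> by (intro Min_eqI[symmetric]) auto
  also have "\<dots> = b" unfolding eq using H(7,8) \<open>finite T\<close> by (intro Min_eqI) auto
  finally have "a = b" .
  have "S = insert a (insert (Suc k) S) - {a, Suc k}" using H by auto
  also have "\<dots> = T" using H eq \<open>a = b\<close> by auto
  finally show "a = b \<and> S = T" using \<open>a = b\<close> by simp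
qed

lemma sum_admissible_rows_from:
  assumes a: "a \<in> V" "1 \<le> a" "a \<le> k"
  shows "(\<Sum>S\<in>Pow ({Suc a..k} - V). \<Prod>j\<in>{2..k}-(V \<union> insert a (insert (Suc k) S)). j - 1)
           = (\<Prod>j\<in>{2..a}-V. j - 1) * (\<Prod>j\<in>{Suc a..k} - V. j::nat)"
proof -
  let ?F = "{Suc a..k} - V"
  have "(\<Prod>j\<in>{2..k}-(V \<union> insert a (insert (Suc k) S)). j - 1)
          = (\<Prod>j\<in>{2..a}-V. j-1) * ((\<Prod>j\<in>S. 1) * (\<Prod>j\<in>?F - S. j - 1))"
    if S: "S \<in> Pow ?F" for S
  proof -
    have "{2..k}-(V \<union> insert a (insert (Suc k) S)) = ({2..a}-V) \<union> (?F - S)" using a S by auto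
    moreover have "(\<Prod>j\<in>({2..a}-V) \<union> (?F - S). j - 1)
                   = (\<Prod>j\<in>{2..a}-V. j-1) * (\<Prod>j\<in>?F - S. j - (1::nat))"
      by (rule prod.union_disjoint) auto
    ultimately show ?thesis by simp
  qed
  then have "(\<Sum>S\<in>Pow ?F. \<Prod>j\<in>{2..k}-(V \<union> insert a (insert (Suc k) S)). j - 1)
           = (\<Sum>S\<in>Pow ?F. (\<Prod>j\<in>{2..a}-V. j-1) * ((\<Prod>j\<in>S. 1) * (\<Prod>j\<in>?F - S. j - 1)))"
    by (rule sum.cong[OF refl])
  also have "\<dots> = (\<Prod>j\<in>{2..a}-V. j-1) * (\<Prod>j\<in>?F. 1 + (j - 1))"
    unfolding sum_distrib_left[symmetric] by (subst prod_add) simp_all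
  also have "(\<Prod>j\<in>?F. 1 + (j - 1)) = (\<Prod>j\<in>?F. j)" by (rule prod.cong) auto
  finally show ?thesis .
qed

lemma sum_admissible_rows:
  assumes "1 \<in> V"
  shows "(\<Sum>R\<in>{R. admissible_row (Suc k) V R}. \<Prod>j\<in>{2..k}-(V\<union>R). j - (1::nat))
           = (\<Prod>j\<in>{2..Suc k}-V. j - 1)"
proof (cases "Suc k \<in> V")
  case True
  have "{2..k}-(V\<union>{Suc k}) = {2..Suc k}-V" using True by (auto simp: le_Suc_eq)
  then show ?thesis using admissible_rows_last_in[OF True] by simp
next
  case False
  have k1: "1 \<le> k" using False assms by (cases k) auto
  let ?A = "{a\<in>V. 1\<le>a \<and> a\<le>k}"
  let ?g = "\<lambda>R. \<Prod>j\<in>{2..k}-(V\<union>R). j - (1::nat)"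
  have "(\<Sum>R\<in>{R. admissible_row (Suc k) V R}. ?g R)
        = sum (?g \<circ> (\<lambda>(a,S). insert a (insert (Suc k) S))) (SIGMA a:?A. Pow ({Suc a..k} - V))"
    unfolding admissible_rows_last_notin[OF False assms]
    by (rule sum.reindex[OF inj_on_admissible_row_param[OF False]])
  also have "\<dots> = (\<Sum>a\<in>?A. \<Sum>S\<in>Pow ({Suc a..k} - V). ?g (insert a (insert (Suc k) S)))"
    by (subst sum.Sigma) (auto intro!: sum.cong)
  also have "\<dots> = (\<Sum>a\<in>?A. (\<Prod>j\<in>{2..a}-V. j-1) * (\<Prod>j\<in>{Suc a..k}-V. j))"
    by (rule sum.cong[OF refl], rule sum_admissible_rows_from) auto
  also have "\<dots> = k * (\<Prod>j\<in>{2..k}-V. j-1)" by (rule sum_prod_split_telescope[OF assms k1])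
  also have "\<dots> = (\<Prod>j\<in>{2..Suc k}-V. j - 1)"
  proof -
    have "{2..Suc k}-V = insert (Suc k) ({2..k}-V)" using False k1 by (auto simp: le_Suc_eq)
    then show ?thesis by simp
  qed
  finally show ?thesis .
qed

section \<open>Staircase configurations\<close>

definition staircase :: "nat \<Rightarrow> (nat \<times> nat) set" where
  "staircase m = {(i,j). 1 \<le> i \<and> 1 \<le> j \<and> i + j \<le> Suc m}"

definition antidiagonal :: "nat \<Rightarrow> (nat \<times> nat) set" where
  "antidiagonal m = {(i, Suc m - i) | i. 1 \<le> i \<and> i \<le> m}"

text \<open>\<open>V\<close> is the set of columns that already contain a vertex in rows lying above \<open>W\<close>.\<close>

definition nonambiguous :: "nat set \<Rightarrow> (nat \<times> nat) set \<Rightarrow> bool" where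
  "nonambiguous V W \<longleftrightarrow>
     (\<forall>i j. (i,j) \<in> W \<longrightarrow> ((j \<in> V \<or> (\<exists>i'<i. (i',j) \<in> W)) \<noteq> (\<exists>j'<j. (i,j') \<in> W)))"

definition staircase_configs :: "nat \<Rightarrow> nat set \<Rightarrow> (nat \<times> nat) set set" where
  "staircase_configs m V =
     {W. antidiagonal m \<subseteq> W \<and> W \<subseteq> staircase m \<and> nonambiguous V W}"

definition first_row :: "(nat \<times> nat) set \<Rightarrow> nat set" where
  "first_row W = {j. (1,j) \<in> W}"

definition lower_rows :: "(nat \<times> nat) set \<Rightarrow> (nat \<times> nat) set" where
  "lower_rows W = {(i,j). 1 \<le> i \<and> (Suc i, j) \<in> W}"

definition stack_row :: "nat set \<Rightarrow> (nat \<times> nat) set \<Rightarrow> (nat \<times> nat) set" where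
  "stack_row R W = (\<lambda>j. (1,j)) ` R \<union> (\<lambda>(i,j). (Suc i, j)) ` W"

lemma mem_stack_row:
  "(a,b) \<in> stack_row R W \<longleftrightarrow> (a = 1 \<and> b \<in> R) \<or> (\<exists>i. a = Suc i \<and> (i,b) \<in> W)"
  unfolding stack_row_def by auto

lemma finite_staircase: "finite (staircase m)"
  by (rule finite_subset[of _ "{..Suc m} \<times> {..Suc m}"]) (auto simp: staircase_def)

lemma finite_staircase_configs: "finite (staircase_configs m V)"
  by (rule finite_subset[of _ "Pow (staircase m)"]) (auto simp: staircase_configs_def finite_staircase)

lemma staircase_configs_0: "staircase_configs 0 V = {{}}"
proof -
  have "staircase 0 = {}" "antidiagonal 0 = {}" by (auto simp: staircase_def antidiagonal_def)
  then show ?thesis by (auto simp: staircase_configs_def nonambiguous_def)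
qed

lemma admissible_first_row:
  assumes "W \<in> staircase_configs (Suc k) V"
  shows "admissible_row (Suc k) V (first_row W)"
proof -
  have t: "W \<subseteq> staircase (Suc k)" and a: "antidiagonal (Suc k) \<subseteq> W" and x: "nonambiguous V W"
    using assms by (auto simp: staircase_configs_def)
  have "(1, Suc k) \<in> antidiagonal (Suc k)" unfolding antidiagonal_def by force
  then have "Suc k \<in> first_row W" using a by (auto simp: first_row_def)
  moreover have "(j \<in> V) \<noteq> (\<exists>j'\<in>first_row W. j' < j)" if "j \<in> first_row W" for j
  proof -
    have "(1,j) \<in> W" using that by (simp add: first_row_def)
    then have "(j \<in> V \<or> (\<exists>i'<1. (i',j) \<in> W)) \<noteq> (\<exists>j'<j. (1,j') \<in> W)"
      using x unfolding nonambiguous_def by blast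
    moreover have "\<not> (\<exists>i'<1. (i',j) \<in> W)" using t by (auto simp: staircase_def)
    ultimately show ?thesis by (auto simp: first_row_def)
  qed
  moreover have "first_row W \<subseteq> {1..Suc k}" using t by (auto simp: first_row_def staircase_def)
  ultimately show ?thesis by (simp add: admissible_row_def)
qed

lemma nonambiguous_lower_rows:
  assumes t: "W \<subseteq> staircase m" and x: "nonambiguous V W"
  shows "nonambiguous (V \<union> first_row W) (lower_rows W)"
  unfolding nonambiguous_def
proof (intro allI impI)
  fix i j assume "(i,j) \<in> lower_rows W"
  then have i1: "1 \<le> i" and w: "(Suc i, j) \<in> W" by (auto simp: lower_rows_def)
  have xx: "(j \<in> V \<or> (\<exists>i'<Suc i. (i',j) \<in> W)) \<noteq> (\<exists>j'<j. (Suc i,j') \<in> W)"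
    using x w by (simp add: nonambiguous_def)
  have left: "(\<exists>j'<j. (i,j') \<in> lower_rows W) = (\<exists>j'<j. (Suc i,j') \<in> W)"
    using i1 by (auto simp: lower_rows_def)
  have above: "(\<exists>i'<Suc i. (i',j) \<in> W) = ((1,j) \<in> W \<or> (\<exists>i'<i. (i',j) \<in> lower_rows W))"
  proof
    assume "\<exists>i'<Suc i. (i',j) \<in> W"
    then obtain i' where i': "i' < Suc i" "(i',j) \<in> W" by blast
    moreover have "1 \<le> i'" using i' t by (auto simp: staircase_def)
    ultimately show "(1,j) \<in> W \<or> (\<exists>i'<i. (i',j) \<in> lower_rows W)"
      by (cases i') (auto simp: lower_rows_def Suc_le_eq)
  next
    assume "(1,j) \<in> W \<or> (\<exists>i'<i. (i',j) \<in> lower_rows W)"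
    then show "\<exists>i'<Suc i. (i',j) \<in> W"
      using i1 by (auto simp: lower_rows_def intro: le_imp_less_Suc)
  qed
  show "(j \<in> V \<union> first_row W \<or> (\<exists>i'<i. (i',j) \<in> lower_rows W)) \<noteq> (\<exists>j'<j. (i,j') \<in> lower_rows W)"
    using xx unfolding left above by (auto simp: first_row_def)
qed

lemma lower_rows_in_staircase_configs:
  assumes "W \<in> staircase_configs (Suc k) V"
  shows "lower_rows W \<in> staircase_configs k (V \<union> first_row W)"
proof -
  have t: "W \<subseteq> staircase (Suc k)" and a: "antidiagonal (Suc k) \<subseteq> W" and x: "nonambiguous V W"
    using assms by (auto simp: staircase_configs_def)
  have "antidiagonal k \<subseteq> lower_rows W"
  proof
    fix p assume "p \<in> antidiagonal k"
    then obtain i where p: "p = (i, Suc k - i)" "1 \<le> i" "i \<le> k" by (auto simp: antidiagonal_def)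
    have "(Suc i, Suc (Suc k) - Suc i) \<in> antidiagonal (Suc k)" unfolding antidiagonal_def using p by force
    then show "p \<in> lower_rows W" using a p by (auto simp: lower_rows_def)
  qed
  moreover have "lower_rows W \<subseteq> staircase k" using t by (auto simp: lower_rows_def staircase_def)
  ultimately show ?thesis using nonambiguous_lower_rows[OF t x] by (simp add: staircase_configs_def)
qed

lemma nonambiguous_stack_row:
  assumes R: "admissible_row m V R" and t: "W \<subseteq> staircase k" and x: "nonambiguous (V \<union> R) W"
  shows "nonambiguous V (stack_row R W)"
  unfolding nonambiguous_def
proof (intro allI impI)
  fix i j assume ij: "(i,j) \<in> stack_row R W"
  show "(j \<in> V \<or> (\<exists>i'<i. (i',j) \<in> stack_row R W)) \<noteq> (\<exists>j'<j. (i,j') \<in> stack_row R W)"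
  proof (cases "i = 1")
    case True
    then have "j \<in> R" using ij t by (auto simp: mem_stack_row staircase_def)
    moreover have "\<not> (\<exists>i'<i. (i',j) \<in> stack_row R W)" using True t by (auto simp: mem_stack_row)
    moreover have "(\<exists>j'<j. (i,j') \<in> stack_row R W) = (\<exists>j'\<in>R. j' < j)"
      using True t by (auto simp: mem_stack_row staircase_def)
    ultimately show ?thesis using R by (auto simp: admissible_row_def)
  next
    case False
    then obtain i0 where i0: "i = Suc i0" "(i0,j) \<in> W" using ij by (auto simp: mem_stack_row)
    have i01: "1 \<le> i0" using i0 t by (auto simp: staircase_def)
    have xx: "(j \<in> V \<union> R \<or> (\<exists>i'<i0. (i',j) \<in> W)) \<noteq> (\<exists>j'<j. (i0,j') \<in> W)"
      using x i0 by (simp add: nonambiguous_def)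
    have left: "(\<exists>j'<j. (i,j') \<in> stack_row R W) = (\<exists>j'<j. (i0,j') \<in> W)"
      using i0 i01 by (auto simp: mem_stack_row)
    have above: "(\<exists>i'<i. (i',j) \<in> stack_row R W) = (j \<in> R \<or> (\<exists>i'<i0. (i',j) \<in> W))"
      using i0 i01 by (auto simp: mem_stack_row intro: exI[of _ 1] exI[of _ "Suc _"])
    show ?thesis using xx unfolding left above by auto
  qed
qed

lemma stack_row_in_staircase_configs:
  assumes R: "admissible_row (Suc k) V R" and W: "W \<in> staircase_configs k (V \<union> R)"
  shows "stack_row R W \<in> staircase_configs (Suc k) V"
proof -
  have t: "W \<subseteq> staircase k" and a: "antidiagonal k \<subseteq> W" and x: "nonambiguous (V \<union> R) W"
    using W by (auto simp: staircase_configs_def)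
  have R1: "R \<subseteq> {1..Suc k}" "Suc k \<in> R" using R by (auto simp: admissible_row_def)
  have "antidiagonal (Suc k) \<subseteq> stack_row R W"
  proof
    fix p assume "p \<in> antidiagonal (Suc k)"
    then obtain i where p: "p = (i, Suc (Suc k) - i)" "1 \<le> i" "i \<le> Suc k"
      by (auto simp: antidiagonal_def)
    show "p \<in> stack_row R W"
    proof (cases "i = 1")
      case True
      then show ?thesis using p R1 by (simp add: mem_stack_row)
    next
      case False
      then obtain i' where i': "i = Suc i'" "1 \<le> i'" "i' \<le> k" using p by (cases i) auto
      then have "(i', Suc k - i') \<in> antidiagonal k" unfolding antidiagonal_def by force
      then show ?thesis using a p i' by (auto simp: mem_stack_row)
    qed
  qed
  moreover have "stack_row R W \<subseteq> staircase (Suc k)"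
    using t R1(1) by (auto simp: stack_row_def staircase_def)
  ultimately show ?thesis using nonambiguous_stack_row[OF R t x] by (simp add: staircase_configs_def)
qed

lemma bij_betw_split_first_row:
  "bij_betw (\<lambda>W. (first_row W, lower_rows W)) (staircase_configs (Suc k) V)
     (SIGMA R:{R. admissible_row (Suc k) V R}. staircase_configs k (V \<union> R))"
proof (rule bij_betw_byWitness[where f'="\<lambda>(R,W). stack_row R W"])
  show "\<forall>W\<in>staircase_configs (Suc k) V. (case (first_row W, lower_rows W) of (R, W') \<Rightarrow> stack_row R W') = W"
  proof (intro ballI set_eqI)
    fix W and p :: "nat \<times> nat" assume "W \<in> staircase_configs (Suc k) V"
    then have "W \<subseteq> staircase (Suc k)" by (simp add: staircase_configs_def)
    then show "p \<in> (case (first_row W, lower_rows W) of (R, W') \<Rightarrow> stack_row R W') \<longleftrightarrow> p \<in> W"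
      by (cases p; case_tac "fst p") (auto simp: mem_stack_row first_row_def lower_rows_def staircase_def Suc_le_eq)
  qed
  show "\<forall>x\<in>(SIGMA R:{R. admissible_row (Suc k) V R}. staircase_configs k (V \<union> R)).
          (\<lambda>W. (first_row W, lower_rows W)) (case x of (R, W) \<Rightarrow> stack_row R W) = x"
  proof clarify
    fix R W assume "W \<in> staircase_configs k (V \<union> R)"
    then have t: "W \<subseteq> staircase k" by (simp add: staircase_configs_def)
    have "first_row (stack_row R W) = R" using t by (auto simp: first_row_def mem_stack_row staircase_def)
    moreover have "lower_rows (stack_row R W) = W"
      using t by (auto simp: lower_rows_def mem_stack_row staircase_def)
    ultimately show "first_row (stack_row R W) = R \<and> lower_rows (stack_row R W) = W" by simp
  qed
  show "(\<lambda>W. (first_row W, lower_rows W)) ` staircase_configs (Suc k) V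
          \<subseteq> (SIGMA R:{R. admissible_row (Suc k) V R}. staircase_configs k (V \<union> R))"
    using admissible_first_row lower_rows_in_staircase_configs by blast
  show "(\<lambda>(R, W). stack_row R W) ` (SIGMA R:{R. admissible_row (Suc k) V R}. staircase_configs k (V \<union> R))
          \<subseteq> staircase_configs (Suc k) V"
    using stack_row_in_staircase_configs by auto
qed

lemma card_staircase_configs:
  assumes "1 \<in> V"
  shows "card (staircase_configs m V) = (\<Prod>j\<in>{2..m}-V. j - 1)"
  using assms
proof (induction m arbitrary: V)
  case 0
  then show ?case by (simp add: staircase_configs_0)
next
  case (Suc k)
  have "card (staircase_configs (Suc k) V)
        = card (SIGMA R:{R. admissible_row (Suc k) V R}. staircase_configs k (V \<union> R))"
    by (rule bij_betw_same_card[OF bij_betw_split_first_row])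
  also have "\<dots> = (\<Sum>R\<in>{R. admissible_row (Suc k) V R}. card (staircase_configs k (V \<union> R)))"
    by (rule card_SigmaI) (auto simp: finite_admissible_rows finite_staircase_configs)
  also have "\<dots> = (\<Sum>R\<in>{R. admissible_row (Suc k) V R}. \<Prod>j\<in>{2..k}-(V\<union>R). j - 1)"
    using Suc by (intro sum.cong) simp_all
  also have "\<dots> = (\<Prod>j\<in>{2..Suc k}-V. j - 1)" by (rule sum_admissible_rows[OF Suc.prems])
  finally show ?case .
qed

lemma cnm_parent_pair:
  "cnm_parent T (i,j) =
     (if \<exists>i'<i. (i', j) \<in> T then (Max {i'. i' < i \<and> (i', j) \<in> T}, j)
      else (i, Max {j'. j' < j \<and> (i, j') \<in> T}))"
  by (simp add: cnm_parent_def Let_def)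

lemma finite_less_Collect: "finite {i'. i' < (i::nat) \<and> P i'}"
  by (rule finite_subset[of _ "{..<i}"]) auto

lemma obtain_nearest_above:
  fixes c j :: nat
  assumes "P j" "c < j"
  obtains k where "P k" "c < k" "\<forall>y. c < y \<and> y < k \<longrightarrow> \<not> P y"
proof -
  obtain k where "P k \<and> c < k" "\<forall>y<k. \<not> (P y \<and> c < y)"
    using exists_least_iff[of "\<lambda>y. P y \<and> c < y"] assms by blast
  then show ?thesis using that by blast
qed

lemma cnm_parent_row_neighbour:
  assumes "(i,c) \<in> T" "c < j" "\<forall>y. c < y \<and> y < j \<longrightarrow> (i,y) \<notin> T" "\<not> (\<exists>i'<i. (i',j) \<in> T)"
  shows "cnm_parent T (i,j) = (i,c)"
proof -
  have "Max {j'. j' < j \<and> (i, j') \<in> T} = c"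
    using assms(1-3) by (intro Max_eqI finite_less_Collect) (auto simp: not_less[symmetric])
  then show ?thesis unfolding cnm_parent_pair if_not_P[OF assms(4)] by simp
qed

lemma cnm_parent_column_neighbour:
  assumes "(a,j) \<in> T" "a < i" "\<forall>y. a < y \<and> y < i \<longrightarrow> (y,j) \<notin> T"
  shows "cnm_parent T (i,j) = (a,j)"
proof -
  have above: "\<exists>i'<i. (i',j) \<in> T" using assms(1,2) by blast
  have "Max {i'. i' < i \<and> (i', j) \<in> T} = a"
    using assms by (intro Max_eqI finite_less_Collect) (auto simp: not_less[symmetric])
  then show ?thesis unfolding cnm_parent_pair if_P[OF above] by simp
qed

lemma cnm_child_position:
  assumes "(i,j) \<in> cnm_children T (a,b)" "(\<exists>i'<i. (i',j) \<in> T) \<or> (\<exists>j'<j. (i,j') \<in> T)"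
  shows "(j = b \<and> a < i \<and> (\<forall>y. a < y \<and> y < i \<longrightarrow> (y,j) \<notin> T)) \<or>
         (i = a \<and> b < j \<and> (\<forall>y. b < y \<and> y < j \<longrightarrow> (i,y) \<notin> T))"
proof -
  have par: "cnm_parent T (i,j) = (a,b)" using assms(1) by (simp add: cnm_children_def)
  show ?thesis
  proof (cases "\<exists>i'<i. (i', j) \<in> T")
    case True
    let ?M = "Max {i'. i' < i \<and> (i', j) \<in> T}"
    have "?M \<in> {i'. i' < i \<and> (i', j) \<in> T}" using True by (intro Max_in finite_less_Collect) auto
    moreover have "y \<le> ?M" if "y < i" "(y,j) \<in> T" for y
      using that by (intro Max_ge finite_less_Collect) auto
    moreover have "(?M, j) = (a,b)" using par unfolding cnm_parent_pair if_P[OF True] .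
    ultimately show ?thesis by (auto simp: not_le[symmetric])
  next
    case False
    let ?M = "Max {j'. j' < j \<and> (i, j') \<in> T}"
    have "?M \<in> {j'. j' < j \<and> (i, j') \<in> T}"
      using False assms(2) by (intro Max_in finite_less_Collect) auto
    moreover have "y \<le> ?M" if "y < j" "(i,y) \<in> T" for y
      using that by (intro Max_ge finite_less_Collect) auto
    moreover have "(i, ?M) = (a,b)" using par unfolding cnm_parent_pair if_not_P[OF False] .
    ultimately show ?thesis by (auto simp: not_le[symmetric])
  qed
qed

section \<open>Upper-diagonal CNMs as staircase configurations\<close>

lemma antidiagonal_eq: "{(i, n + 1 - i) | i. i \<in> {1..n}} = antidiagonal n"
  by (auto simp: antidiagonal_def)

text \<open>A vertex to the right of the anti-diagonal leaf of its row would make the nearest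
  such vertex a child of that leaf.\<close>

lemma upper_diagonal_cnm_subset_staircase:
  assumes "is_upper_diagonal_cnm n T"
  shows "T \<subseteq> staircase n"
proof
  fix p assume pT: "p \<in> T"
  obtain i j where p: "p = (i,j)" by fastforce
  have C: "is_cnm n T" and L: "cnm_leaves T = antidiagonal n"
    using assms unfolding is_upper_diagonal_cnm_def antidiagonal_eq by auto
  have sq: "T \<subseteq> {1..n} \<times> {1..n}" using C by (simp add: is_cnm_def)
  have xr: "\<And>i j. (i,j) \<in> T \<Longrightarrow> (i,j) \<noteq> (1,1) \<Longrightarrow> (\<exists>i'<i. (i', j) \<in> T) \<noteq> (\<exists>j'<j. (i, j') \<in> T)"
    using C unfolding is_cnm_def by blast
  have ij: "1 \<le> i" "i \<le> n" "1 \<le> j" using sq pT p by auto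
  show "p \<in> staircase n"
  proof (rule ccontr)
    assume "p \<notin> staircase n"
    then have "Suc n - i < j" using ij p by (auto simp: staircase_def)
    moreover have leaf: "(i, Suc n - i) \<in> cnm_leaves T" using L ij unfolding antidiagonal_def by auto
    moreover have "(i,j) \<in> T" using pT p by simp
    ultimately obtain k where k: "(i,k) \<in> T" "Suc n - i < k"
      and between: "\<forall>y. Suc n - i < y \<and> y < k \<longrightarrow> (i,y) \<notin> T"
      using obtain_nearest_above[of "\<lambda>y. (i,y) \<in> T" j "Suc n - i"] by blast
    have leafT: "(i, Suc n - i) \<in> T" using leaf by (simp add: cnm_leaves_def)
    have "(i,k) \<noteq> (1,1)" using k(2) ij by auto
    then have "\<not> (\<exists>i'<i. (i',k) \<in> T)" using xr[OF k(1)] leafT k(2) by blast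
    then have "cnm_parent T (i,k) = (i, Suc n - i)"
      using leafT k between by (intro cnm_parent_row_neighbour) auto
    then have "(i,k) \<in> cnm_children T (i, Suc n - i)"
      using k \<open>(i,k) \<noteq> (1,1)\<close> by (simp add: cnm_children_def)
    then show False using leaf by (simp add: cnm_leaves_def)
  qed
qed

lemma upper_diagonal_cnm_in_staircase_configs:
  assumes "is_upper_diagonal_cnm n T"
  shows "T \<in> staircase_configs n {1}"
proof -
  have C: "is_cnm n T" and L: "cnm_leaves T = antidiagonal n"
    using assms unfolding is_upper_diagonal_cnm_def antidiagonal_eq by auto
  have sq: "T \<subseteq> {1..n} \<times> {1..n}" and root: "(1,1) \<in> T" using C by (simp_all add: is_cnm_def)
  have xr: "\<And>i j. (i,j) \<in> T \<Longrightarrow> (i,j) \<noteq> (1,1) \<Longrightarrow> (\<exists>i'<i. (i', j) \<in> T) \<noteq> (\<exists>j'<j. (i, j') \<in> T)"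
    using C unfolding is_cnm_def by blast
  have "nonambiguous {1} T"
    unfolding nonambiguous_def
  proof (intro allI impI)
    fix i j assume ij: "(i,j) \<in> T"
    show "(j \<in> {1} \<or> (\<exists>i'<i. (i', j) \<in> T)) \<noteq> (\<exists>j'<j. (i, j') \<in> T)"
    proof (cases "(i,j) = (1,1)")
      case False
      moreover have "j = 1 \<Longrightarrow> i \<noteq> 1 \<Longrightarrow> \<exists>i'<i. (i', j) \<in> T"
        using sq ij root by (intro exI[of _ 1]) auto
      ultimately show ?thesis using xr[OF ij] by auto
    qed (use sq in auto)
  qed
  moreover have "antidiagonal n \<subseteq> T" using L unfolding cnm_leaves_def by blast
  ultimately show ?thesis
    using upper_diagonal_cnm_subset_staircase[OF assms] by (simp add: staircase_configs_def)
qed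

context
  fixes n :: nat and T :: "(nat \<times> nat) set"
  assumes config: "T \<in> staircase_configs n {1}" and n_pos: "1 \<le> n"
begin

lemma config_subset_staircase: "T \<subseteq> staircase n"
  using config by (simp add: staircase_configs_def)

lemma config_antidiagonal: "antidiagonal n \<subseteq> T"
  using config by (simp add: staircase_configs_def)

lemma config_nonambiguous: "nonambiguous {1} T"
  using config by (simp add: staircase_configs_def)

lemma config_root: "(1,1) \<in> T"
proof -
  have "(1, n) \<in> antidiagonal n" using n_pos unfolding antidiagonal_def by force
  then obtain j where j: "(1,j) \<in> T" "\<forall>y<j. (1,y) \<notin> T"
    using config_antidiagonal exists_least_iff[of "\<lambda>y. (1,y) \<in> T"] by blast
  have "(j \<in> {1} \<or> (\<exists>i'<1. (i', j) \<in> T)) \<noteq> (\<exists>j'<j. (1, j') \<in> T)"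
    using config_nonambiguous j(1) unfolding nonambiguous_def by blast
  moreover have "\<not> (\<exists>i'<1. (i', j) \<in> T)" using config_subset_staircase by (auto simp: staircase_def)
  ultimately show ?thesis using j by auto
qed

lemma config_exclusive:
  assumes "(i,j) \<in> T" "(i,j) \<noteq> (1,1)"
  shows "(\<exists>i'<i. (i', j) \<in> T) \<noteq> (\<exists>j'<j. (i, j') \<in> T)"
proof -
  have x: "(j \<in> {1} \<or> (\<exists>i'<i. (i', j) \<in> T)) \<noteq> (\<exists>j'<j. (i, j') \<in> T)"
    using config_nonambiguous assms(1) unfolding nonambiguous_def by blast
  have "1 \<le> i" using assms(1) config_subset_staircase by (auto simp: staircase_def)
  then have "j = 1 \<Longrightarrow> \<exists>i'<i. (i', j) \<in> T" using config_root assms(2) by (intro exI[of _ 1]) auto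
  then show ?thesis using x by auto
qed

lemma config_child_position:
  assumes "(i,j) \<in> cnm_children T (a,b)"
  shows "(j = b \<and> a < i \<and> (\<forall>y. a < y \<and> y < i \<longrightarrow> (y,j) \<notin> T)) \<or>
         (i = a \<and> b < j \<and> (\<forall>y. b < y \<and> y < j \<longrightarrow> (i,y) \<notin> T))"
  using assms config_exclusive[of i j] by (intro cnm_child_position) (auto simp: cnm_children_def)

lemma config_children_antidiagonal:
  assumes "(a,b) \<in> antidiagonal n"
  shows "cnm_children T (a,b) = {}"
proof (rule ccontr)
  assume "cnm_children T (a,b) \<noteq> {}"
  then obtain i j where q: "(i,j) \<in> cnm_children T (a,b)" by fastforce
  then have "i + j \<le> Suc n" using config_subset_staircase by (auto simp: cnm_children_def staircase_def)
  moreover have "a + b = Suc n" using assms by (auto simp: antidiagonal_def)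
  moreover have "a + b < i + j" using config_child_position[OF q] by auto
  ultimately show False by simp
qed

lemma config_children_interior:
  assumes abT: "(a,b) \<in> T" and off: "(a,b) \<notin> antidiagonal n"
  shows "card (cnm_children T (a,b)) = 2"
proof -
  have ab: "1 \<le> a" "1 \<le> b" "a + b \<le> Suc n" using abT config_subset_staircase by (auto simp: staircase_def)
  have "a + b \<noteq> Suc n" using off ab unfolding antidiagonal_def by force
  then have lt: "a + b < Suc n" using ab by simp
  have "(a, Suc n - a) \<in> T" "(Suc n - b, b) \<in> T"
    using config_antidiagonal ab lt unfolding antidiagonal_def by force+
  moreover have "b < Suc n - a" "a < Suc n - b" using lt by auto
  ultimately obtain jr ib where
      r: "(a,jr) \<in> T" "b < jr" "\<forall>y. b < y \<and> y < jr \<longrightarrow> (a,y) \<notin> T" and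
      d: "(ib,b) \<in> T" "a < ib" "\<forall>y. a < y \<and> y < ib \<longrightarrow> (y,b) \<notin> T"
    using obtain_nearest_above[of "\<lambda>y. (a,y) \<in> T" "Suc n - a" b]
          obtain_nearest_above[of "\<lambda>y. (y,b) \<in> T" "Suc n - b" a] by metis
  have r1: "(a,jr) \<noteq> (1,1)" and d1: "(ib,b) \<noteq> (1,1)" using r(2) d(2) ab by auto
  have "\<not> (\<exists>i'<a. (i',jr) \<in> T)" using config_exclusive[OF r(1) r1] abT r(2) by blast
  then have "cnm_parent T (a,jr) = (a,b)" using abT r by (intro cnm_parent_row_neighbour)
  moreover have "cnm_parent T (ib,b) = (a,b)" using abT d by (intro cnm_parent_column_neighbour)
  moreover have "q = (a,jr) \<or> q = (ib,b)" if "q \<in> cnm_children T (a,b)" for q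
  proof -
    obtain i j where q: "q = (i,j)" by fastforce
    have child: "(i,j) \<in> cnm_children T (a,b)" using that q by simp
    then have qT: "(i,j) \<in> T" by (simp add: cnm_children_def)
    from config_child_position[OF child] show ?thesis
    proof (elim disjE conjE)
      assume "j = b" "a < i" "\<forall>y. a < y \<and> y < i \<longrightarrow> (y,j) \<notin> T"
      then show ?thesis using qT q d by (cases i ib rule: linorder_cases) auto
    next
      assume "i = a" "b < j" "\<forall>y. b < y \<and> y < j \<longrightarrow> (i,y) \<notin> T"
      then show ?thesis using qT q r by (cases j jr rule: linorder_cases) auto
    qed
  qed
  ultimately have "cnm_children T (a,b) = {(a,jr), (ib,b)}"
    using r(1) d(1) r1 d1 by (auto simp: cnm_children_def)
  moreover have "(a,jr) \<noteq> (ib,b)" using r(2) by auto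
  ultimately show ?thesis by simp
qed

lemma config_is_upper_diagonal_cnm: "is_upper_diagonal_cnm n T"
proof -
  have square: "T \<subseteq> {1..n} \<times> {1..n}" using config_subset_staircase n_pos by (auto simp: staircase_def)
  have rows: "\<forall>i \<in> {1..n}. \<exists>j. (i, j) \<in> T"
  proof
    fix i assume "i \<in> {1..n}"
    then have "(i, Suc n - i) \<in> antidiagonal n" unfolding antidiagonal_def by force
    then show "\<exists>j. (i, j) \<in> T" using config_antidiagonal by blast
  qed
  have cols: "\<forall>j \<in> {1..n}. \<exists>i. (i, j) \<in> T"
  proof
    fix j assume j: "j \<in> {1..n}"
    then have "(Suc n - j, Suc n - (Suc n - j)) \<in> antidiagonal n" unfolding antidiagonal_def by force
    then show "\<exists>i. (i, j) \<in> T" using config_antidiagonal j by auto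
  qed
  have children: "\<forall>p \<in> T. card (cnm_children T p) = 0 \<or> card (cnm_children T p) = 2"
    using config_children_antidiagonal config_children_interior by fastforce
  have "is_cnm n T"
    unfolding is_cnm_def using square config_root config_exclusive rows cols children by blast
  moreover have "cnm_leaves T = antidiagonal n"
  proof (intro set_eqI iffI)
    fix p assume "p \<in> cnm_leaves T"
    then show "p \<in> antidiagonal n"
      using config_children_interior[of "fst p" "snd p"] by (auto simp: cnm_leaves_def)
  next
    fix p assume "p \<in> antidiagonal n"
    then show "p \<in> cnm_leaves T"
      using config_antidiagonal config_children_antidiagonal[of "fst p" "snd p"]
      by (auto simp: cnm_leaves_def)
  qed
  ultimately show ?thesis unfolding is_upper_diagonal_cnm_def antidiagonal_eq by simp
qed

end

theorem theorem4p3: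
  fixes n :: nat
  assumes "n \<ge> 1"
  shows "(\<exists>f. bij_betw f {T. is_upper_diagonal_cnm n T} {p. p permutes {1..<n}}) \<and>
         card {T. is_upper_diagonal_cnm n T} = fact (n - 1)"
proof -
  have configs: "{T. is_upper_diagonal_cnm n T} = staircase_configs n {1}"
    using upper_diagonal_cnm_in_staircase_configs config_is_upper_diagonal_cnm[OF _ assms] by blast
  obtain m where m: "n = Suc m" using assms by (cases n) auto
  have "card {T. is_upper_diagonal_cnm n T} = (\<Prod>j\<in>{2..n}-{1}. j - 1)"
    unfolding configs by (rule card_staircase_configs) simp
  also have "{2..n} - {1} = {2..Suc m}" using m by auto
  finally have card_ud: "card {T. is_upper_diagonal_cnm n T} = fact (n - 1)"
    using m prod_atLeastAtMost_pred_eq_fact by simp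
  have "card {p. p permutes {1..<n}} = fact (n - 1)"
    by (rule card_permutations) auto
  then have "\<exists>f. bij_betw f {T. is_upper_diagonal_cnm n T} {p. p permutes {1..<n}}"
    using card_ud by (intro finite_same_card_bij) (auto simp: configs finite_staircase_configs finite_permutations)
  then show ?thesis using card_ud by blast
qed

end
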